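(* Let $G$ be a path-connected $H$-space and let $f,g\colon G\times G\to G$ be continuous maps. Then $\mathrm{D}(f,g)\leq \mathrm{cat}(G)$.
   Context: An $H$-space is a topological space $G$ together with continuous maps $\mu\colon G\times G\to G$ (multiplication) and $\delta\colon G\times G\to G$ (division) and an element $x_0\in G$ such that the map $G\times G\to G$, $(x,y)\mapsto \mu(x,\delta(x,y))$, is homotopic to the second projection $p_2$, and the map $x\mapsto\mu(x,x_0)$ is homotopic to $\mathrm{id}_G$ (associativity is not required). For continuous maps $f,g\colon X\to Y$, the homotopic distance $\mathrm{D}(f,g)$ is the least integer $n\geq 0$ such that there is an open cover $\{U_0,\dots,U_n\}$ of $X$ with $f|_{U_j}\simeq g|_{U_j}$ for all $j$ ($\infty$ if none exists). For a path-connected space $X$, $\mathrm{cat}(X)$ is the least integer $n\geq 0$ such that $X$ can be covered by $n+1$ open sets whose inclusions into $X$ are null-homotopic. *)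

theory Defs
  imports "HOL-Analysis.Analysis" "HOL-Library.Extended_Nat"
begin

definition H_space :: "'a topology \<Rightarrow> ('a \<times> 'a \<Rightarrow> 'a) \<Rightarrow> ('a \<times> 'a \<Rightarrow> 'a) \<Rightarrow> 'a \<Rightarrow> bool" where
  "H_space G mu delta x0 \<longleftrightarrow>
     continuous_map (prod_topology G G) G mu \<and>
     continuous_map (prod_topology G G) G delta \<and>
     x0 \<in> topspace G \<and>
     homotopic_with (\<lambda>_. True) (prod_topology G G) G (\<lambda>(x,y). mu (x, delta (x,y))) snd \<and>
     homotopic_with (\<lambda>_. True) G G (\<lambda>x. mu (x, x0)) id"

definition homotopic_distance :: "'a topology \<Rightarrow> 'b topology \<Rightarrow> ('a \<Rightarrow> 'b) \<Rightarrow> ('a \<Rightarrow> 'b) \<Rightarrow> enat" where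
  "homotopic_distance X Y f g =
     (INF n \<in> {n::nat. \<exists>U. (\<forall>j\<le>n. openin X (U j)) \<and> (\<Union>j\<le>n. U j) = topspace X \<and>
                 (\<forall>j\<le>n. homotopic_with (\<lambda>_. True) (subtopology X (U j)) Y f g)}. enat n)"

definition LS_cat :: "'a topology \<Rightarrow> enat" where
  "LS_cat X =
     (INF n \<in> {n::nat. \<exists>U. (\<forall>j\<le>n. openin X (U j)) \<and> (\<Union>j\<le>n. U j) = topspace X \<and>
                 (\<forall>j\<le>n. \<exists>c. homotopic_with (\<lambda>_. True) (subtopology X (U j)) X id (\<lambda>_. c))}. enat n)"

end

theory Submission
  imports Defs
begin

text \<open>Pull a categorical open cover U of G back along the division map x \<mapsto> \<delta>(f x, g x).
  On each preimage V the division map is null-homotopic, hence (G being path-connected)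
  homotopic to the constant map at the unit x0; then
  f \<simeq> \<mu>(f, x0) \<simeq> \<mu>(f, \<delta>(f, g)) \<simeq> g on V by the two H-space homotopies.\<close>

lemma continuous_map_compose_paired:
  assumes "continuous_map X Y f" and "continuous_map X Z g"
    and "continuous_map (prod_topology Y Z) W m"
  shows "continuous_map X W (\<lambda>x. m (f x, g x))"
  using continuous_map_compose[OF continuous_map_pairedI[OF assms(1,2)] assms(3)]
  by (simp add: o_def)

lemma homotopic_with_paired_right:
  assumes "homotopic_with (\<lambda>_. True) X Y h h'"
    and "continuous_map X Z f" and "continuous_map (prod_topology Z Y) W m"
  shows "homotopic_with (\<lambda>_. True) X W (\<lambda>x. m (f x, h x)) (\<lambda>x. m (f x, h' x))"
proof -
  have "homotopic_with (\<lambda>_. True) (prod_topology X X) (prod_topology Z Y)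
      (\<lambda>z. (f (fst z), h (snd z))) (\<lambda>z. (f (fst z), h' (snd z)))"
    using assms(1,2) by (intro homotopic_with_prod_topology) auto
  then have "homotopic_with (\<lambda>_. True) X (prod_topology Z Y) (\<lambda>x. (f x, h x)) (\<lambda>x. (f x, h' x))"
    using homotopic_with_compose_continuous_map_right[of _ _ _ _ _ X "\<lambda>x. (x, x)"]
    by (fastforce simp: o_def continuous_map_pairwise)
  then show ?thesis
    using homotopic_with_compose_continuous_map_left[OF _ assms(3)] by (fastforce simp: o_def)
qed

lemma homotopic_with_const_path_connected:
  assumes "path_connected_space Y" and "homotopic_with (\<lambda>_. True) X Y h (\<lambda>_. c)"
    and "b \<in> topspace Y"
  shows "homotopic_with (\<lambda>_. True) X Y h (\<lambda>_. b)"
proof (cases "X = trivial_topology")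
  case True
  then show ?thesis by (simp add: homotopic_on_empty)
next
  case False
  then have "c \<in> topspace Y"
    using homotopic_with_imp_continuous_maps[OF assms(2)] by (simp add: continuous_map_const)
  then have "homotopic_with (\<lambda>_. True) X Y (\<lambda>_. c) (\<lambda>_. b)"
    using assms(1,3) by (simp add: homotopic_constant_maps path_connected_space_iff_path_component)
  then show ?thesis
    using assms(2) homotopic_with_trans by blast
qed

lemma homotopic_with_const_on_preimage:
  assumes "continuous_map X Y h"
    and "homotopic_with (\<lambda>_. True) (subtopology Y U) Y id (\<lambda>_. c)"
  shows "homotopic_with (\<lambda>_. True) (subtopology X {x \<in> topspace X. h x \<in> U}) Y h (\<lambda>_. c)"
proof -
  have "continuous_map (subtopology X {x \<in> topspace X. h x \<in> U}) (subtopology Y U) h"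
    using assms(1) by (auto simp: continuous_map_in_subtopology continuous_map_from_subtopology)
  from homotopic_with_compose_continuous_map_right[OF assms(2) this]
  show ?thesis by (simp add: o_def)
qed

lemma H_space_homotopic_if_division_homotopic_unit:
  assumes H: "H_space G mu delta x0"
    and f: "continuous_map X G f" and g: "continuous_map X G g"
    and div: "homotopic_with (\<lambda>_. True) X G (\<lambda>x. delta (f x, g x)) (\<lambda>_. x0)"
  shows "homotopic_with (\<lambda>_. True) X G f g"
proof -
  have mu: "continuous_map (prod_topology G G) G mu"
    and left_div: "homotopic_with (\<lambda>_. True) (prod_topology G G) G (\<lambda>(x,y). mu (x, delta (x,y))) snd"
    and right_unit: "homotopic_with (\<lambda>_. True) G G (\<lambda>x. mu (x, x0)) id"
    using H unfolding H_space_def by auto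
  have "homotopic_with (\<lambda>_. True) X G f (\<lambda>x. mu (f x, x0))"
    using homotopic_with_compose_continuous_map_right[OF right_unit f]
    by (simp add: o_def homotopic_with_sym)
  moreover have "homotopic_with (\<lambda>_. True) X G (\<lambda>x. mu (f x, x0)) (\<lambda>x. mu (f x, delta (f x, g x)))"
    using homotopic_with_paired_right[OF div f mu] by (simp add: homotopic_with_sym)
  moreover have "homotopic_with (\<lambda>_. True) X G (\<lambda>x. mu (f x, delta (f x, g x))) g"
    using homotopic_with_compose_continuous_map_right[OF left_div continuous_map_pairedI[OF f g]]
    by (simp add: o_def)
  ultimately show ?thesis
    by (meson homotopic_with_trans)
qed

lemma H_space_homotopic_on_division_preimage:
  assumes "path_connected_space G" and H: "H_space G mu delta x0"
    and f: "continuous_map X G f" and g: "continuous_map X G g"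
    and U: "homotopic_with (\<lambda>_. True) (subtopology G U) G id (\<lambda>_. c)"
  shows "homotopic_with (\<lambda>_. True) (subtopology X {x \<in> topspace X. delta (f x, g x) \<in> U}) G f g"
proof -
  let ?V = "{x \<in> topspace X. delta (f x, g x) \<in> U}"
  have div: "continuous_map X G (\<lambda>x. delta (f x, g x))"
    using H f g unfolding H_space_def by (auto intro: continuous_map_compose_paired)
  have "homotopic_with (\<lambda>_. True) (subtopology X ?V) G (\<lambda>x. delta (f x, g x)) (\<lambda>_. x0)"
    using homotopic_with_const_path_connected[OF assms(1) homotopic_with_const_on_preimage[OF div U]] H
    unfolding H_space_def by blast
  then show ?thesis
    using H_space_homotopic_if_division_homotopic_unit[OF H]
      continuous_map_from_subtopology[OF f] continuous_map_from_subtopology[OF g]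
    by blast
qed

lemma open_cover_vimage:
  assumes "continuous_map X Y h"
    and "\<And>j. j \<in> J \<Longrightarrow> openin Y (U j)" and "(\<Union>j\<in>J. U j) = topspace Y"
  shows "\<And>j. j \<in> J \<Longrightarrow> openin X {x \<in> topspace X. h x \<in> U j}"
    and "(\<Union>j\<in>J. {x \<in> topspace X. h x \<in> U j}) = topspace X"
proof -
  show "openin X {x \<in> topspace X. h x \<in> U j}" if "j \<in> J" for j
    using openin_continuous_map_preimage[OF assms(1) assms(2)[OF that]] .
  have "h x \<in> (\<Union>j\<in>J. U j)" if "x \<in> topspace X" for x
    using that assms(3) continuous_map_image_subset_topspace[OF assms(1)] by auto
  then show "(\<Union>j\<in>J. {x \<in> topspace X. h x \<in> U j}) = topspace X"
    by auto
qed

theorem theorem4p1: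
  fixes G :: "'a topology" and mu delta f g :: "'a \<times> 'a \<Rightarrow> 'a" and x0 :: 'a
  assumes "path_connected_space G"
    and "H_space G mu delta x0"
    and "continuous_map (prod_topology G G) G f"
    and "continuous_map (prod_topology G G) G g"
  shows "homotopic_distance (prod_topology G G) G f g \<le> LS_cat G"
  unfolding LS_cat_def
proof (rule INF_greatest, clarify)
  let ?X = "prod_topology G G"
  fix n and U :: "nat \<Rightarrow> 'a set"
  assume opens: "\<forall>j\<le>n. openin G (U j)" and cover: "(\<Union>j\<le>n. U j) = topspace G"
    and categorical: "\<forall>j\<le>n. \<exists>c. homotopic_with (\<lambda>_. True) (subtopology G (U j)) G id (\<lambda>_. c)"
  define V where "V j = {x \<in> topspace ?X. delta (f x, g x) \<in> U j}" for j
  have div: "continuous_map ?X G (\<lambda>x. delta (f x, g x))"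
    using assms(2-4) unfolding H_space_def by (auto intro: continuous_map_compose_paired)
  have "\<forall>j\<le>n. homotopic_with (\<lambda>_. True) (subtopology ?X (V j)) G f g"
    using categorical H_space_homotopic_on_division_preimage[OF assms] unfolding V_def by blast
  moreover have "\<forall>j\<le>n. openin ?X (V j)" and "(\<Union>j\<le>n. V j) = topspace ?X"
    using open_cover_vimage[OF div, of "{..n}" U] opens cover unfolding V_def by auto
  ultimately have "n \<in> {n. \<exists>V. (\<forall>j\<le>n. openin ?X (V j)) \<and> (\<Union>j\<le>n. V j) = topspace ?X \<and>
      (\<forall>j\<le>n. homotopic_with (\<lambda>_. True) (subtopology ?X (V j)) G f g)}"
    by blast
  then show "homotopic_distance ?X G f g \<le> enat n"
    unfolding homotopic_distance_def by (rule INF_lower)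
qed

end
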